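(* Let $P$ be a finitely recursive normal program and let $\mathsf{CounterSupp}$ be complete with respect to $P$. Suppose that for some grounding substitution $\gamma$, the implication $(\bigwedge G\leftarrow\bigwedge H)\gamma$ holds in all stable models of $P$, where $G,H$ are finite sequences of literals. Then the h-goal $(G\mid H)$ has a successful skeptical derivation from $P$ and $\mathsf{CounterSupp}$ with restart goal $G$ and some answer substitution $\theta$ more general than $\gamma$ (i.e., $\gamma$ coincides on the variables of $G,H$ with $\theta\sigma$ for some substitution $\sigma$).
   Context: A normal program is a set of rules $A\leftarrow L_1,\dots,L_n$ ($A$ an atom, $L_i$ atoms or negated atoms $\mathtt{not}\,B$), possibly with function symbols; $\mathsf{Ground}(P)$ is its ground instantiation. $M$ (a set of ground atoms) is a stable model iff $M$ is the least model of the reduct $P^M$ obtained from $\mathsf{Ground}(P)$ by deleting rules with some $\mathtt{not}\,B$ in the body, $B\in M$, and deleting negative literals from the rest. The dependency graph has an edge from $A$ to each atom occurring in the body of a ground rule with head $A$; $A$ depends on $B$ if there is a path from $A$ to $B$ (each atom depends on itself); $P$ is finitely recursive iff each ground atom depends on finitely many atoms. For a literal $L$, $\bar L=\mathtt{not}\,A$ if $L=A$ and $\bar L=A$ if $L=\mathtt{not}\,A$. Supports: a support for a ground atom $A$ is a set of negative literals that is the final goal of an SLD derivation from $A$ using $\mathsf{Ground}(P)$ in which only positive literals are resolved, ending when no positive literal is left. A ground counter-support for $A$ is a set $K$ of ground atoms such that (1) every support $S$ of $A$ contains some $\mathtt{not}\,B$ with $B\in K$, and (2) for each $B\in K$ some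 support of $A$ contains $\mathtt{not}\,B$. A (generalized) counter-support for an atom $A$ is a pair $\langle K,\theta\rangle$, $K$ a set of atoms, $\theta$ a substitution, such that for every grounding substitution $\sigma$, $K\sigma$ is a ground counter-support for $A\theta\sigma$. $\mathsf{CounterSupp}$ is a function mapping each (possibly nonground) atom $A$ to a set of finite generalized counter-supports for $A$; it is complete iff for every atom $A$, every ground instance $A\gamma$ and every ground counter-support $K$ of $A\gamma$ there are $\langle K',\theta\rangle\in\mathsf{CounterSupp}(A)$ and $\sigma$ with $A\theta\sigma=A\gamma$ and $K'\sigma=K$. Calculus: an h-goal is a pair $(G\mid H)$ of finite sequences of literals; an s-goal is a finite sequence of h-goals. A skeptical derivation from $P$ and $\mathsf{CounterSupp}$ with restart goal $G_0$ is a sequence of s-goals $\Gamma_0,\Gamma_1,\dots$ with $\Gamma_0=(G_0\mid H_0)$, each obtained from the previous one by one of the rules below ($\Gamma,\Delta$ are arbitrary s-goal contexts): Resolution (program): if $L_i$ is an atom, $A\leftarrow B_1,\dots,B_k$ a renamed-apart variant of a rule of $P$, $\theta$ an mgu of $L_i$ and $A$: rewrite $\Gamma\,(L_1\dots L_{i-1},L_i,L_{i+1}\dots L_n\mid H)\,\Delta$ into $[\Gamma\,(L_1\dots L_{i-1},B_1,\dots,B_k,L_{i+1}\dots L_n\mid H)\,\Delta]\theta$. Resolution (hypothesis): if $L'$ is in the hypotheses and $\theta$ an mgu of $L_i$ and $L'$: rewrite $\Gamma\,(L_1\dots L_n\mid H,L')\,\Delta$ into $[\Gamma\,(L_1\dots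 L_{i-1},L_{i+1}\dots L_n\mid H,L')\,\Delta]\theta$. Contradiction: rewrite $\Gamma\,(G\mid H,L)\,\Delta$ into $\Gamma\,(\bar L\mid H,L)\,\Delta$. Split: for any literal $L$, rewrite $\Gamma\,(G\mid H)\,\Delta$ into $\Gamma\,(G\mid H,L)\,(G_0\sigma\mid H,\bar L)\,\Delta$, where $\sigma$ is the composition of the mgus/substitutions computed so far in the derivation. Success: rewrite $\Gamma\,(\Box\mid H)\,\Delta$ into $\Gamma\,\Delta$ ($\Box$ the empty goal). Failure: if $L_i=\mathtt{not}\,A$ and $\langle\{B_1,\dots,B_k\},\theta\rangle\in\mathsf{CounterSupp}(A)$: rewrite $\Gamma\,(L_1\dots L_{i-1},L_i,L_{i+1}\dots L_n\mid H)\,\Delta$ into $[\Gamma\,(L_1\dots L_{i-1},B_1,\dots,B_k,L_{i+1}\dots L_n\mid H)\,\Delta]\theta$. A derivation is successful if its last s-goal is empty; its answer substitution is the composition of the substitutions applied along it (restricted to the variables of the initial h-goal). *)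

theory Defs
  imports Main
begin

datatype ('f,'v) trm = Var 'v | Fun 'f "('f,'v) trm list"
datatype ('p,'f,'v) atom = Atom 'p "('f,'v) trm list"
datatype ('p,'f,'v) lit = Pos "('p,'f,'v) atom" | Neg "('p,'f,'v) atom"

type_synonym ('f,'v) subst = "'v \<Rightarrow> ('f,'v) trm"
type_synonym ('p,'f,'v) rule = "('p,'f,'v) atom \<times> ('p,'f,'v) lit list"
text \<open>h-goal (G | H) and s-goal (list of h-goals).\<close>
type_synonym ('p,'f,'v) hgoal = "('p,'f,'v) lit list \<times> ('p,'f,'v) lit list"
type_synonym ('p,'f,'v) sgoal = "('p,'f,'v) hgoal list"

fun subst_trm :: "('f,'v) trm \<Rightarrow> ('f,'v) subst \<Rightarrow> ('f,'v) trm" where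
  "subst_trm (Var x) \<sigma> = \<sigma> x"
| "subst_trm (Fun f ts) \<sigma> = Fun f (map (\<lambda>t. subst_trm t \<sigma>) ts)"

fun vars_trm :: "('f,'v) trm \<Rightarrow> 'v set" where
  "vars_trm (Var x) = {x}"
| "vars_trm (Fun f ts) = (\<Union>t\<in>set ts. vars_trm t)"

fun subst_atom :: "('p,'f,'v) atom \<Rightarrow> ('f,'v) subst \<Rightarrow> ('p,'f,'v) atom" where
  "subst_atom (Atom p ts) \<sigma> = Atom p (map (\<lambda>t. subst_trm t \<sigma>) ts)"

fun vars_atom :: "('p,'f,'v) atom \<Rightarrow> 'v set" where
  "vars_atom (Atom p ts) = (\<Union>t\<in>set ts. vars_trm t)"

fun subst_lit :: "('p,'f,'v) lit \<Rightarrow> ('f,'v) subst \<Rightarrow> ('p,'f,'v) lit" where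
  "subst_lit (Pos A) \<sigma> = Pos (subst_atom A \<sigma>)"
| "subst_lit (Neg A) \<sigma> = Neg (subst_atom A \<sigma>)"

fun atom_of :: "('p,'f,'v) lit \<Rightarrow> ('p,'f,'v) atom" where
  "atom_of (Pos A) = A"
| "atom_of (Neg A) = A"

fun neg_lit :: "('p,'f,'v) lit \<Rightarrow> ('p,'f,'v) lit" where
  "neg_lit (Pos A) = Neg A"
| "neg_lit (Neg A) = Pos A"

definition vars_lit :: "('p,'f,'v) lit \<Rightarrow> 'v set" where
  "vars_lit L = vars_atom (atom_of L)"

definition vars_lits :: "('p,'f,'v) lit list \<Rightarrow> 'v set" where
  "vars_lits Ls = (\<Union>L\<in>set Ls. vars_lit L)"

definition subst_lits :: "('p,'f,'v) lit list \<Rightarrow> ('f,'v) subst \<Rightarrow> ('p,'f,'v) lit list" where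
  "subst_lits Ls \<sigma> = map (\<lambda>L. subst_lit L \<sigma>) Ls"

definition subst_rule :: "('p,'f,'v) rule \<Rightarrow> ('f,'v) subst \<Rightarrow> ('p,'f,'v) rule" where
  "subst_rule r \<sigma> = (subst_atom (fst r) \<sigma>, subst_lits (snd r) \<sigma>)"

definition vars_rule :: "('p,'f,'v) rule \<Rightarrow> 'v set" where
  "vars_rule r = vars_atom (fst r) \<union> vars_lits (snd r)"

definition subst_hgoal :: "('p,'f,'v) hgoal \<Rightarrow> ('f,'v) subst \<Rightarrow> ('p,'f,'v) hgoal" where
  "subst_hgoal g \<sigma> = (subst_lits (fst g) \<sigma>, subst_lits (snd g) \<sigma>)"

definition vars_hgoal :: "('p,'f,'v) hgoal \<Rightarrow> 'v set" where
  "vars_hgoal g = vars_lits (fst g) \<union> vars_lits (snd g)"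

definition subst_sgoal :: "('p,'f,'v) sgoal \<Rightarrow> ('f,'v) subst \<Rightarrow> ('p,'f,'v) sgoal" where
  "subst_sgoal gs \<sigma> = map (\<lambda>g. subst_hgoal g \<sigma>) gs"

definition vars_sgoal :: "('p,'f,'v) sgoal \<Rightarrow> 'v set" where
  "vars_sgoal gs = (\<Union>g\<in>set gs. vars_hgoal g)"

text \<open>Composition: first sigma, then theta.\<close>
definition comp_subst :: "('f,'v) subst \<Rightarrow> ('f,'v) subst \<Rightarrow> ('f,'v) subst" where
  "comp_subst \<sigma> \<theta> = (\<lambda>x. subst_trm (\<sigma> x) \<theta>)"

definition ground_atom :: "('p,'f,'v) atom \<Rightarrow> bool" where
  "ground_atom A \<longleftrightarrow> vars_atom A = {}"

definition grounding :: "('f,'v) subst \<Rightarrow> bool" where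
  "grounding \<sigma> \<longleftrightarrow> (\<forall>x. vars_trm (\<sigma> x) = {})"

definition ground_prog :: "('p,'f,'v) rule set \<Rightarrow> ('p,'f,'v) rule set" where
  "ground_prog P = {subst_rule r \<sigma> | r \<sigma>. r \<in> P \<and> vars_rule (subst_rule r \<sigma>) = {}}"

definition reduct :: "('p,'f,'v) rule set \<Rightarrow> ('p,'f,'v) atom set
    \<Rightarrow> (('p,'f,'v) atom \<times> ('p,'f,'v) atom list) set" where
  "reduct P M = {(A, [atom_of L. L \<leftarrow> Bs, \<exists>B. L = Pos B]) | A Bs.
      (A, Bs) \<in> ground_prog P \<and> (\<forall>B. Neg B \<in> set Bs \<longrightarrow> B \<notin> M)}"

inductive_set least_model :: "(('p,'f,'v) atom \<times> ('p,'f,'v) atom list) set \<Rightarrow> ('p,'f,'v) atom set"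
  for R where
  lm_rule: "(A, Bs) \<in> R \<Longrightarrow> (\<forall>B\<in>set Bs. B \<in> least_model R) \<Longrightarrow> A \<in> least_model R"

definition stable_model :: "('p,'f,'v) rule set \<Rightarrow> ('p,'f,'v) atom set \<Rightarrow> bool" where
  "stable_model P M \<longleftrightarrow> M = least_model (reduct P M)"

fun lit_true :: "('p,'f,'v) atom set \<Rightarrow> ('p,'f,'v) lit \<Rightarrow> bool" where
  "lit_true M (Pos A) \<longleftrightarrow> A \<in> M"
| "lit_true M (Neg A) \<longleftrightarrow> A \<notin> M"

definition dep_edge :: "('p,'f,'v) rule set \<Rightarrow> ('p,'f,'v) atom \<Rightarrow> ('p,'f,'v) atom \<Rightarrow> bool" where
  "dep_edge P A B \<longleftrightarrow> (\<exists>Bs. (A, Bs) \<in> ground_prog P \<and> B \<in> atom_of ` set Bs)"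

definition finitely_recursive :: "('p,'f,'v) rule set \<Rightarrow> bool" where
  "finitely_recursive P \<longleftrightarrow>
     (\<forall>A. ground_atom A \<longrightarrow> finite {B. (dep_edge P)\<^sup>*\<^sup>* A B})"

definition supp_step :: "('p,'f,'v) rule set \<Rightarrow> ('p,'f,'v) lit list \<Rightarrow> ('p,'f,'v) lit list \<Rightarrow> bool" where
  "supp_step P Gs Gs' \<longleftrightarrow> (\<exists>xs A ys Bs. Gs = xs @ Pos A # ys \<and> (A, Bs) \<in> ground_prog P
      \<and> Gs' = xs @ Bs @ ys)"

definition is_support :: "('p,'f,'v) rule set \<Rightarrow> ('p,'f,'v) atom \<Rightarrow> ('p,'f,'v) lit set \<Rightarrow> bool" where
  "is_support P A S \<longleftrightarrow> (\<exists>Gs. (supp_step P)\<^sup>*\<^sup>* [Pos A] Gs \<and> (\<forall>L\<in>set Gs. \<exists>B. L = Neg B)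
      \<and> S = set Gs)"

definition ground_counter_support :: "('p,'f,'v) rule set \<Rightarrow> ('p,'f,'v) atom set \<Rightarrow> ('p,'f,'v) atom \<Rightarrow> bool" where
  "ground_counter_support P K A \<longleftrightarrow>
     (\<forall>B\<in>K. ground_atom B)
     \<and> (\<forall>S. is_support P A S \<longrightarrow> (\<exists>B\<in>K. Neg B \<in> S))
     \<and> (\<forall>B\<in>K. \<exists>S. is_support P A S \<and> Neg B \<in> S)"

text \<open>Generalized counter-support (K, theta) for A, K a finite set of atoms given as a list.\<close>
definition gen_counter_support :: "('p,'f,'v) rule set \<Rightarrow> ('p,'f,'v) atom
    \<Rightarrow> ('p,'f,'v) atom list \<times> ('f,'v) subst \<Rightarrow> bool" where
  "gen_counter_support P A c \<longleftrightarrow>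
     (\<forall>\<sigma>. grounding \<sigma> \<longrightarrow>
        ground_counter_support P ((\<lambda>B. subst_atom B \<sigma>) ` set (fst c))
          (subst_atom (subst_atom A (snd c)) \<sigma>))"

definition counter_supp_fun :: "('p,'f,'v) rule set
    \<Rightarrow> (('p,'f,'v) atom \<Rightarrow> (('p,'f,'v) atom list \<times> ('f,'v) subst) set) \<Rightarrow> bool" where
  "counter_supp_fun P CS \<longleftrightarrow> (\<forall>A. \<forall>c\<in>CS A. gen_counter_support P A c)"

definition cs_complete :: "('p,'f,'v) rule set
    \<Rightarrow> (('p,'f,'v) atom \<Rightarrow> (('p,'f,'v) atom list \<times> ('f,'v) subst) set) \<Rightarrow> bool" where
  "cs_complete P CS \<longleftrightarrow>
     (\<forall>A \<gamma> K. ground_atom (subst_atom A \<gamma>) \<longrightarrow> ground_counter_support P K (subst_atom A \<gamma>) \<longrightarrow>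
        (\<exists>c\<in>CS A. \<exists>\<sigma>. subst_atom (subst_atom A (snd c)) \<sigma> = subst_atom A \<gamma>
                     \<and> (\<lambda>B. subst_atom B \<sigma>) ` set (fst c) = K))"

definition is_mgu_lit :: "('f,'v) subst \<Rightarrow> ('p,'f,'v) lit \<Rightarrow> ('p,'f,'v) lit \<Rightarrow> bool" where
  "is_mgu_lit \<theta> L L' \<longleftrightarrow> subst_lit L \<theta> = subst_lit L' \<theta>
     \<and> (\<forall>\<tau>. subst_lit L \<tau> = subst_lit L' \<tau> \<longrightarrow> (\<exists>\<delta>. \<forall>x. \<tau> x = subst_trm (\<theta> x) \<delta>))"

definition variant :: "('p,'f,'v) rule \<Rightarrow> ('p,'f,'v) rule \<Rightarrow> bool" where
  "variant r r' \<longleftrightarrow> (\<exists>\<pi>. bij \<pi> \<and> r' = subst_rule r (\<lambda>x. Var (\<pi> x)))"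

text \<open>States: (current s-goal, composition of substitutions so far, variables used so far).
  G0 is the restart goal.\<close>
inductive sk_step :: "('p,'f,'v) rule set
    \<Rightarrow> (('p,'f,'v) atom \<Rightarrow> (('p,'f,'v) atom list \<times> ('f,'v) subst) set)
    \<Rightarrow> ('p,'f,'v) lit list
    \<Rightarrow> ('p,'f,'v) sgoal \<times> ('f,'v) subst \<times> 'v set
    \<Rightarrow> ('p,'f,'v) sgoal \<times> ('f,'v) subst \<times> 'v set \<Rightarrow> bool"
  for P CS G0 where
  res_prog:
  "\<lbrakk> r \<in> P; variant r (A, Bs);
     vars_rule (A, Bs) \<inter> (U \<union> vars_sgoal (\<Gamma> @ (Ls1 @ Pos A0 # Ls2, H) # \<Delta>)) = {};
     is_mgu_lit \<theta> (Pos A0) (Pos A);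
     \<Gamma>' = subst_sgoal (\<Gamma> @ (Ls1 @ Bs @ Ls2, H) # \<Delta>) \<theta> \<rbrakk>
   \<Longrightarrow> sk_step P CS G0 (\<Gamma> @ (Ls1 @ Pos A0 # Ls2, H) # \<Delta>, \<sigma>, U)
         (\<Gamma>', comp_subst \<sigma> \<theta>, U \<union> vars_rule (A, Bs) \<union> vars_sgoal \<Gamma>')"
| res_hyp:
  "\<lbrakk> L' \<in> set H; is_mgu_lit \<theta> L L';
     \<Gamma>' = subst_sgoal (\<Gamma> @ (Ls1 @ Ls2, H) # \<Delta>) \<theta> \<rbrakk>
   \<Longrightarrow> sk_step P CS G0 (\<Gamma> @ (Ls1 @ L # Ls2, H) # \<Delta>, \<sigma>, U)
         (\<Gamma>', comp_subst \<sigma> \<theta>, U \<union> vars_sgoal \<Gamma>')"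
| contradiction:
  "\<lbrakk> L \<in> set H; \<Gamma>' = \<Gamma> @ ([neg_lit L], H) # \<Delta> \<rbrakk>
   \<Longrightarrow> sk_step P CS G0 (\<Gamma> @ (G, H) # \<Delta>, \<sigma>, U) (\<Gamma>', \<sigma>, U \<union> vars_sgoal \<Gamma>')"
| split:
  "\<Gamma>' = \<Gamma> @ (G, H @ [L]) # (subst_lits G0 \<sigma>, H @ [neg_lit L]) # \<Delta>
   \<Longrightarrow> sk_step P CS G0 (\<Gamma> @ (G, H) # \<Delta>, \<sigma>, U) (\<Gamma>', \<sigma>, U \<union> vars_sgoal \<Gamma>')"
| success:
  "sk_step P CS G0 (\<Gamma> @ ([], H) # \<Delta>, \<sigma>, U) (\<Gamma> @ \<Delta>, \<sigma>, U)"
| failure: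
  "\<lbrakk> (K, \<theta>) \<in> CS A;
     \<Gamma>' = subst_sgoal (\<Gamma> @ (Ls1 @ map Pos K @ Ls2, H) # \<Delta>) \<theta> \<rbrakk>
   \<Longrightarrow> sk_step P CS G0 (\<Gamma> @ (Ls1 @ Neg A # Ls2, H) # \<Delta>, \<sigma>, U)
         (\<Gamma>', comp_subst \<sigma> \<theta>, U \<union> vars_sgoal \<Gamma>')"

end

(*
  Finite recursiveness and compactness of the space of interpretations reduce the entailment to a
  finite dependency-closed set D of ground atoms: every interpretation that is stable locally on D
  and satisfies H gamma satisfies G gamma. A derivation first instantiates the goal by gamma and then
  splits on every atom of D, so that in each branch the hypotheses decide D. Inconsistent hypotheses
  close by contradiction; if they describe a locally stable interpretation, G gamma is among them;
  otherwise some atom of D is decided wrongly. A wrongly false atom heads a ground rule whose body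
  holds, and closes by resolution with that rule; a wrongly true atom has a counter-support inside
  the hypotheses, and closes by failure.
*)

theory Submission
  imports Defs "HOL-Combinatorics.Transposition" "HOL-Analysis.Function_Topology"
begin

section \<open>Substitutions\<close>

lemma subst_trm_eq_iff: "subst_trm t \<sigma> = subst_trm t \<tau> \<longleftrightarrow> (\<forall>x\<in>vars_trm t. \<sigma> x = \<tau> x)"
  by (induction t) (auto simp: map_eq_conv)

lemma subst_trm_Var [simp]: "subst_trm t Var = t"
  by (induction t) (auto simp: map_idI)

lemma subst_trm_comp: "subst_trm (subst_trm t \<sigma>) \<theta> = subst_trm t (comp_subst \<sigma> \<theta>)"
  by (induction t) (auto simp: comp_subst_def)

lemma vars_subst_trm: "vars_trm (subst_trm t \<sigma>) = (\<Union>x\<in>vars_trm t. vars_trm (\<sigma> x))"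
  by (induction t) auto

lemma finite_vars_trm [simp]: "finite (vars_trm t)"
  by (induction t) auto

lemma subst_trm_ground: "vars_trm t = {} \<Longrightarrow> subst_trm t \<sigma> = t"
  using subst_trm_eq_iff[of t \<sigma> Var] by simp

lemma subst_atom_eq_iff: "subst_atom A \<sigma> = subst_atom A \<tau> \<longleftrightarrow> (\<forall>x\<in>vars_atom A. \<sigma> x = \<tau> x)"
  by (cases A) (auto simp: map_eq_conv subst_trm_eq_iff)

lemma subst_atom_Var [simp]: "subst_atom A Var = A"
  by (cases A) (auto simp: map_idI)

lemma subst_atom_comp: "subst_atom (subst_atom A \<sigma>) \<theta> = subst_atom A (comp_subst \<sigma> \<theta>)"
  by (cases A) (auto simp: subst_trm_comp)

lemma vars_subst_atom: "vars_atom (subst_atom A \<sigma>) = (\<Union>x\<in>vars_atom A. vars_trm (\<sigma> x))"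
  by (cases A) (auto simp: vars_subst_trm)

lemma finite_vars_atom [simp]: "finite (vars_atom A)"
  by (cases A) auto

lemma subst_atom_ground: "vars_atom A = {} \<Longrightarrow> subst_atom A \<sigma> = A"
  using subst_atom_eq_iff[of A \<sigma> Var] by simp

lemma atom_of_subst_lit [simp]: "atom_of (subst_lit L \<sigma>) = subst_atom (atom_of L) \<sigma>"
  by (cases L) auto

lemma subst_lit_eq_iff: "subst_lit L \<sigma> = subst_lit L \<tau> \<longleftrightarrow> (\<forall>x\<in>vars_lit L. \<sigma> x = \<tau> x)"
  by (cases L) (auto simp: vars_lit_def subst_atom_eq_iff)

lemma subst_lit_Var [simp]: "subst_lit L Var = L"
  by (cases L) auto

lemma subst_lit_comp: "subst_lit (subst_lit L \<sigma>) \<theta> = subst_lit L (comp_subst \<sigma> \<theta>)"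
  by (cases L) (auto simp: subst_atom_comp)

lemma vars_subst_lit: "vars_lit (subst_lit L \<sigma>) = (\<Union>x\<in>vars_lit L. vars_trm (\<sigma> x))"
  by (simp add: vars_lit_def vars_subst_atom)

lemma finite_vars_lit [simp]: "finite (vars_lit L)"
  by (simp add: vars_lit_def)

lemma subst_lit_ground: "vars_lit L = {} \<Longrightarrow> subst_lit L \<sigma> = L"
  using subst_lit_eq_iff[of L \<sigma> Var] by (cases L) auto

lemma subst_neg_lit [simp]: "subst_lit (neg_lit L) \<sigma> = neg_lit (subst_lit L \<sigma>)"
  by (cases L) auto

lemma neg_lit_neg_lit [simp]: "neg_lit (neg_lit L) = L"
  by (cases L) auto

lemma vars_neg_lit [simp]: "vars_lit (neg_lit L) = vars_lit L"
  by (cases L) (auto simp: vars_lit_def)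

lemma subst_lits_simps [simp]:
  "subst_lits [] \<sigma> = []"
  "subst_lits (L # Ls) \<sigma> = subst_lit L \<sigma> # subst_lits Ls \<sigma>"
  "subst_lits (Ls @ Ls') \<sigma> = subst_lits Ls \<sigma> @ subst_lits Ls' \<sigma>"
  by (auto simp: subst_lits_def)

lemma set_subst_lits [simp]: "set (subst_lits Ls \<sigma>) = (\<lambda>L. subst_lit L \<sigma>) ` set Ls"
  by (simp add: subst_lits_def)

lemma length_subst_lits [simp]: "length (subst_lits Ls \<sigma>) = length Ls"
  by (simp add: subst_lits_def)

lemma vars_lits_simps [simp]:
  "vars_lits [] = {}"
  "vars_lits (L # Ls) = vars_lit L \<union> vars_lits Ls"
  "vars_lits (Ls @ Ls') = vars_lits Ls \<union> vars_lits Ls'"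
  by (auto simp: vars_lits_def)

lemma finite_vars_lits [simp]: "finite (vars_lits Ls)"
  by (simp add: vars_lits_def vars_lit_def)

lemma vars_lits_empty_iff: "vars_lits Ls = {} \<longleftrightarrow> (\<forall>L\<in>set Ls. vars_lit L = {})"
  by (auto simp: vars_lits_def)

lemma subst_lits_eq_iff: "subst_lits Ls \<sigma> = subst_lits Ls \<tau> \<longleftrightarrow> (\<forall>x\<in>vars_lits Ls. \<sigma> x = \<tau> x)"
  by (induction Ls) (auto simp: subst_lit_eq_iff)

lemma subst_lits_comp: "subst_lits (subst_lits Ls \<sigma>) \<theta> = subst_lits Ls (comp_subst \<sigma> \<theta>)"
  by (induction Ls) (auto simp: subst_lit_comp)

lemma vars_subst_lits: "vars_lits (subst_lits Ls \<sigma>) = (\<Union>x\<in>vars_lits Ls. vars_trm (\<sigma> x))"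
  by (induction Ls) (auto simp: vars_subst_lit)

lemma subst_lits_Var [simp]: "subst_lits Ls Var = Ls"
  by (simp add: subst_lits_def)

lemma subst_lits_ground: "vars_lits Ls = {} \<Longrightarrow> subst_lits Ls \<sigma> = Ls"
  by (induction Ls) (auto simp: subst_lit_ground)

lemma subst_sgoal_simps [simp]:
  "subst_sgoal [] \<sigma> = []"
  "subst_sgoal (g # gs) \<sigma> = subst_hgoal g \<sigma> # subst_sgoal gs \<sigma>"
  by (auto simp: subst_sgoal_def)

lemma vars_sgoal_simps [simp]:
  "vars_sgoal [] = {}"
  "vars_sgoal (g # gs) = vars_hgoal g \<union> vars_sgoal gs"
  "vars_sgoal (gs @ gs') = vars_sgoal gs \<union> vars_sgoal gs'"
  by (auto simp: vars_sgoal_def)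

lemma finite_vars_sgoal [simp]: "finite (vars_sgoal gs)"
  by (auto simp: vars_sgoal_def vars_hgoal_def)

lemma subst_hgoal_Pair [simp]: "subst_hgoal (G, H) \<sigma> = (subst_lits G \<sigma>, subst_lits H \<sigma>)"
  by (simp add: subst_hgoal_def)

lemma vars_hgoal_Pair [simp]: "vars_hgoal (G, H) = vars_lits G \<union> vars_lits H"
  by (simp add: vars_hgoal_def)

lemma subst_sgoal_ground: "vars_sgoal gs = {} \<Longrightarrow> subst_sgoal gs \<sigma> = gs"
  by (induction gs) (auto simp: subst_hgoal_def vars_hgoal_def subst_lits_ground)

lemma finite_vars_rule [simp]: "finite (vars_rule r)"
  by (simp add: vars_rule_def)

lemma comp_subst_Var [simp]: "comp_subst Var \<theta> = \<theta>"
  by (simp add: comp_subst_def)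

lemma comp_subst_at_ground: "vars_trm (\<sigma> x) = {} \<Longrightarrow> comp_subst \<sigma> \<theta> x = \<sigma> x"
  by (simp add: comp_subst_def subst_trm_ground)

section \<open>Closing h-goals by skeptical derivations\<close>

lemma sk_step_success_hd: "sk_step P CS G0 (([], H) # \<Delta>, \<sigma>, U) (\<Delta>, \<sigma>, U)"
  using sk_step.success[of P CS G0 "[]" H \<Delta> \<sigma> U] by simp

lemma sk_step_contradiction_hd:
  "L \<in> set H \<Longrightarrow> sk_step P CS G0 ((G, H) # \<Delta>, \<sigma>, U)
     (([neg_lit L], H) # \<Delta>, \<sigma>, U \<union> vars_sgoal (([neg_lit L], H) # \<Delta>))"
  using sk_step.contradiction[of L H "([neg_lit L], H) # \<Delta>" "[]" \<Delta> P CS G0 G \<sigma> U] by simp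

lemma sk_step_split_hd:
  "sk_step P CS G0 ((G, H) # \<Delta>, \<sigma>, U)
     ((G, H @ [L]) # (subst_lits G0 \<sigma>, H @ [neg_lit L]) # \<Delta>, \<sigma>,
      U \<union> vars_sgoal ((G, H @ [L]) # (subst_lits G0 \<sigma>, H @ [neg_lit L]) # \<Delta>))"
  using sk_step.split[of "(G, H @ [L]) # (subst_lits G0 \<sigma>, H @ [neg_lit L]) # \<Delta>" "[]" G H L G0 \<sigma> \<Delta>
      P CS U] by simp

lemma sk_step_res_hyp_hd:
  "L' \<in> set H \<Longrightarrow> is_mgu_lit \<theta> L L' \<Longrightarrow> sk_step P CS G0 ((L # Ls, H) # \<Delta>, \<sigma>, U)
     (subst_sgoal ((Ls, H) # \<Delta>) \<theta>, comp_subst \<sigma> \<theta>, U \<union> vars_sgoal (subst_sgoal ((Ls, H) # \<Delta>) \<theta>))"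
  using sk_step.res_hyp[of L' H \<theta> L "subst_sgoal ((Ls, H) # \<Delta>) \<theta>" "[]" "[]" Ls \<Delta> P CS G0 \<sigma> U]
  by simp

lemma sk_step_res_prog_hd:
  "r \<in> P \<Longrightarrow> variant r (A, Bs) \<Longrightarrow>
   vars_rule (A, Bs) \<inter> (U \<union> vars_sgoal ((Pos A0 # Ls, H) # \<Delta>)) = {} \<Longrightarrow>
   is_mgu_lit \<theta> (Pos A0) (Pos A) \<Longrightarrow>
   sk_step P CS G0 ((Pos A0 # Ls, H) # \<Delta>, \<sigma>, U)
     (subst_sgoal ((Bs @ Ls, H) # \<Delta>) \<theta>, comp_subst \<sigma> \<theta>,
      U \<union> vars_rule (A, Bs) \<union> vars_sgoal (subst_sgoal ((Bs @ Ls, H) # \<Delta>) \<theta>))"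
  using sk_step.res_prog[of r P A Bs U "[]" "[]" A0 Ls H \<Delta> \<theta> "subst_sgoal ((Bs @ Ls, H) # \<Delta>) \<theta>"
      CS G0 \<sigma>] by simp

lemma sk_step_failure_hd:
  "(K, \<theta>) \<in> CS A \<Longrightarrow> sk_step P CS G0 ((Neg A # Ls, H) # \<Delta>, \<sigma>, U)
     (subst_sgoal ((map Pos K @ Ls, H) # \<Delta>) \<theta>, comp_subst \<sigma> \<theta>,
      U \<union> vars_sgoal (subst_sgoal ((map Pos K @ Ls, H) # \<Delta>) \<theta>))"
  using sk_step.failure[of K \<theta> CS A "subst_sgoal ((map Pos K @ Ls, H) # \<Delta>) \<theta>" "[]" "[]" Ls H \<Delta>
      P G0 \<sigma> U] by simp

lemma sk_step_preserves:
  assumes "sk_step P CS G0 (S, \<sigma>, U) (S', \<sigma>', U')" "finite U"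
  shows "finite U' \<and> (\<forall>x. vars_trm (\<sigma> x) = {} \<longrightarrow> \<sigma>' x = \<sigma> x)"
  using assms by (cases rule: sk_step.cases) (auto simp: comp_subst_at_ground)

lemma sk_steps_preserve:
  assumes "(sk_step P CS G0)\<^sup>*\<^sup>* (S, \<sigma>, U) (S', \<sigma>', U')" "finite U"
  shows "finite U' \<and> (\<forall>x. vars_trm (\<sigma> x) = {} \<longrightarrow> \<sigma>' x = \<sigma> x)"
  using assms
proof (induction "(S', \<sigma>', U')" arbitrary: S' \<sigma>' U' rule: rtranclp_induct)
  case (step s)
  obtain S1 \<sigma>1 U1 where s: "s = (S1, \<sigma>1, U1)" by (cases s)
  with step show ?case using sk_step_preserves[of P CS G0 S1 \<sigma>1 U1 S' \<sigma>' U'] by auto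
qed simp

lemma sk_steps_preserve_ground_restart:
  assumes "(sk_step P CS G0)\<^sup>*\<^sup>* (S, \<sigma>, U) (S', \<sigma>', U')" "finite U"
    and "vars_lits (subst_lits G0 \<sigma>) = {}"
  shows "subst_lits G0 \<sigma>' = subst_lits G0 \<sigma>"
  using sk_steps_preserve[OF assms(1,2)] assms(3)
  by (auto simp: subst_lits_eq_iff vars_subst_lits)

definition matcher :: "('p,'f,'v) lit \<Rightarrow> ('f,'v) subst \<Rightarrow> ('f,'v) subst" where
  "matcher L \<rho> = (\<lambda>x. if x \<in> vars_lit L then \<rho> x else Var x)"

lemma matcher_is_mgu:
  assumes ground: "vars_lit (subst_lit L \<rho>) = {}"
  shows "is_mgu_lit (matcher L \<rho>) L (subst_lit L \<rho>)"
  unfolding is_mgu_lit_def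
proof (intro conjI allI impI)
  have "subst_lit L (matcher L \<rho>) = subst_lit L \<rho>"
    by (simp add: subst_lit_eq_iff matcher_def)
  then show "subst_lit L (matcher L \<rho>) = subst_lit (subst_lit L \<rho>) (matcher L \<rho>)"
    using subst_lit_ground[OF ground] by simp
next
  fix \<tau> assume "subst_lit L \<tau> = subst_lit (subst_lit L \<rho>) \<tau>"
  then have "\<forall>x\<in>vars_lit L. \<tau> x = \<rho> x"
    using subst_lit_ground[OF ground] by (simp add: subst_lit_eq_iff)
  then have "\<forall>x. \<tau> x = subst_trm (matcher L \<rho> x) \<tau>"
    using ground by (auto simp: matcher_def vars_subst_lit subst_trm_ground)
  then show "\<exists>\<delta>. \<forall>x. \<tau> x = subst_trm (matcher L \<rho> x) \<delta>" by blast
qed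

lemma is_mgu_lit_sym: "is_mgu_lit \<theta> L L' \<Longrightarrow> is_mgu_lit \<theta> L' L"
  unfolding is_mgu_lit_def by metis

lemma comp_matcher:
  assumes "vars_lit (subst_lit L \<rho>) = {}"
  shows "comp_subst (matcher L \<rho>) \<rho> = \<rho>"
  using assms by (auto simp: comp_subst_def matcher_def vars_subst_lit subst_trm_ground)

text \<open>Quantifying over every ground rest of the s-goal and every state that instantiates the
  restart goal to Gg makes closing compositional: the rules below chain closed h-goals.\<close>

definition closes :: "('p,'f,'v) rule set \<Rightarrow> (('p,'f,'v) atom \<Rightarrow> (('p,'f,'v) atom list \<times> ('f,'v) subst) set)
    \<Rightarrow> ('p,'f,'v) lit list \<Rightarrow> ('p,'f,'v) lit list \<Rightarrow> ('p,'f,'v) hgoal \<Rightarrow> bool" where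
  "closes P CS G0 Gg g \<longleftrightarrow> (\<forall>\<Delta> \<sigma> U. vars_sgoal \<Delta> = {} \<longrightarrow> finite U \<longrightarrow> subst_lits G0 \<sigma> = Gg \<longrightarrow>
     (\<exists>\<sigma>' U'. (sk_step P CS G0)\<^sup>*\<^sup>* (g # \<Delta>, \<sigma>, U) (\<Delta>, \<sigma>', U')))"

lemma closesD:
  assumes "closes P CS G0 Gg g" "vars_lits Gg = {}" "vars_sgoal \<Delta> = {}" "finite U"
    and "subst_lits G0 \<sigma> = Gg"
  obtains \<sigma>' U' where "(sk_step P CS G0)\<^sup>*\<^sup>* (g # \<Delta>, \<sigma>, U) (\<Delta>, \<sigma>', U')"
    and "finite U'" "subst_lits G0 \<sigma>' = Gg" "\<forall>x. vars_trm (\<sigma> x) = {} \<longrightarrow> \<sigma>' x = \<sigma> x"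
proof -
  obtain \<sigma>' U' where steps: "(sk_step P CS G0)\<^sup>*\<^sup>* (g # \<Delta>, \<sigma>, U) (\<Delta>, \<sigma>', U')"
    using assms unfolding closes_def by blast
  moreover have "subst_lits G0 \<sigma>' = Gg"
    using sk_steps_preserve_ground_restart[OF steps] assms by simp
  ultimately show thesis using that sk_steps_preserve[OF steps] assms(4) by blast
qed

lemma sk_steps_if_closes_all:
  assumes Gg: "vars_lits Gg = {}"
  shows "\<forall>g\<in>set gs. closes P CS G0 Gg g \<Longrightarrow> vars_sgoal (gs @ \<Delta>) = {} \<Longrightarrow> finite U \<Longrightarrow>
    subst_lits G0 \<sigma> = Gg \<Longrightarrow> \<exists>\<sigma>' U'. (sk_step P CS G0)\<^sup>*\<^sup>* (gs @ \<Delta>, \<sigma>, U) (\<Delta>, \<sigma>', U')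
      \<and> (\<forall>x. vars_trm (\<sigma> x) = {} \<longrightarrow> \<sigma>' x = \<sigma> x)"
proof (induction gs arbitrary: \<sigma> U)
  case Nil
  show ?case using rtranclp.rtrancl_refl[of "sk_step P CS G0" "(\<Delta>, \<sigma>, U)"] by auto
next
  case (Cons g gs)
  have g: "closes P CS G0 Gg g" and rest: "\<forall>g\<in>set gs. closes P CS G0 Gg g" "vars_sgoal (gs @ \<Delta>) = {}"
    using Cons.prems(1,2) by auto
  obtain \<sigma>1 U1 where first: "(sk_step P CS G0)\<^sup>*\<^sup>* (g # gs @ \<Delta>, \<sigma>, U) (gs @ \<Delta>, \<sigma>1, U1)"
    and U1: "finite U1" and restart: "subst_lits G0 \<sigma>1 = Gg"
    and \<sigma>1: "\<forall>x. vars_trm (\<sigma> x) = {} \<longrightarrow> \<sigma>1 x = \<sigma> x"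
    using closesD[OF g Gg rest(2) Cons.prems(3,4)] by blast
  obtain \<sigma>2 U2 where second: "(sk_step P CS G0)\<^sup>*\<^sup>* (gs @ \<Delta>, \<sigma>1, U1) (\<Delta>, \<sigma>2, U2)"
    and \<sigma>2: "\<forall>x. vars_trm (\<sigma>1 x) = {} \<longrightarrow> \<sigma>2 x = \<sigma>1 x"
    using Cons.IH[OF rest U1 restart] by blast
  have "\<forall>x. vars_trm (\<sigma> x) = {} \<longrightarrow> \<sigma>2 x = \<sigma> x" using \<sigma>1 \<sigma>2 by simp
  then show ?case using rtranclp_trans[OF first second] by auto
qed

lemma sk_steps_by_hyp_instances:
  assumes H: "vars_lits H = {}" and \<Delta>: "vars_sgoal \<Delta> = {}"
  shows "\<forall>L\<in>set Ls. subst_lit L \<rho> \<in> set H \<Longrightarrow>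
    \<exists>\<sigma>' U'. (sk_step P CS G0)\<^sup>*\<^sup>* ((Ls, H) # \<Delta>, \<sigma>, U) (\<Delta>, \<sigma>', U')"
proof (induction Ls arbitrary: \<sigma> U rule: length_induct)
  case (1 Ls)
  show ?case
  proof (cases Ls)
    case Nil
    then show ?thesis using sk_step_success_hd by blast
  next
    case (Cons L Ls')
    have LH: "subst_lit L \<rho> \<in> set H" using "1.prems" Cons by simp
    then have ground: "vars_lit (subst_lit L \<rho>) = {}"
      using H by (simp add: vars_lits_empty_iff)
    define \<theta> where "\<theta> = matcher L \<rho>"
    have step: "sk_step P CS G0 ((Ls, H) # \<Delta>, \<sigma>, U)
        ((subst_lits Ls' \<theta>, H) # \<Delta>, comp_subst \<sigma> \<theta>, U \<union> vars_sgoal (subst_sgoal ((Ls', H) # \<Delta>) \<theta>))"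
      using sk_step_res_hyp_hd[OF LH matcher_is_mgu[OF ground], of P CS G0 Ls' \<Delta> \<sigma> U] Cons H \<Delta>
      by (simp add: \<theta>_def subst_lits_ground subst_sgoal_ground)
    have "\<forall>L'\<in>set (subst_lits Ls' \<theta>). subst_lit L' \<rho> \<in> set H"
      using "1.prems" Cons by (auto simp: subst_lit_comp \<theta>_def comp_matcher[OF ground])
    moreover have "length (subst_lits Ls' \<theta>) < length Ls" using Cons by simp
    ultimately obtain \<sigma>' U' where "(sk_step P CS G0)\<^sup>*\<^sup>* ((subst_lits Ls' \<theta>, H) # \<Delta>,
        comp_subst \<sigma> \<theta>, U \<union> vars_sgoal (subst_sgoal ((Ls', H) # \<Delta>) \<theta>)) (\<Delta>, \<sigma>', U')"
      using "1.IH" by blast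
    then show ?thesis using step by (meson converse_rtranclp_into_rtranclp)
  qed
qed

lemma closes_by_hyp_instances:
  "vars_lits H = {} \<Longrightarrow> \<forall>L\<in>set Ls. subst_lit L \<rho> \<in> set H \<Longrightarrow> closes P CS G0 Gg (Ls, H)"
  unfolding closes_def using sk_steps_by_hyp_instances by blast

lemma closes_by_hyps:
  "vars_lits H = {} \<Longrightarrow> set Ls \<subseteq> set H \<Longrightarrow> closes P CS G0 Gg (Ls, H)"
  by (rule closes_by_hyp_instances[where \<rho> = Var]) auto

lemma closes_contradiction:
  fixes H :: "('p,'f,'v) lit list"
  assumes "L \<in> set H" "closes P CS G0 Gg ([neg_lit L], H)"
  shows "closes P CS G0 Gg (G, H)"
  unfolding closes_def
proof (intro allI impI)
  fix \<Delta> :: "('p,'f,'v) sgoal" and \<sigma> and U :: "'v set"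
  assume "vars_sgoal \<Delta> = {}" "finite U" "subst_lits G0 \<sigma> = Gg"
  moreover have "finite (U \<union> vars_sgoal (([neg_lit L], H) # \<Delta>))" using \<open>finite U\<close> by simp
  ultimately obtain \<sigma>' U' where "(sk_step P CS G0)\<^sup>*\<^sup>*
      (([neg_lit L], H) # \<Delta>, \<sigma>, U \<union> vars_sgoal (([neg_lit L], H) # \<Delta>)) (\<Delta>, \<sigma>', U')"
    using assms(2) unfolding closes_def by blast
  then show "\<exists>\<sigma>' U'. (sk_step P CS G0)\<^sup>*\<^sup>* ((G, H) # \<Delta>, \<sigma>, U) (\<Delta>, \<sigma>', U')"
    using sk_step_contradiction_hd[OF assms(1)] by (meson converse_rtranclp_into_rtranclp)
qed

lemma closes_inconsistent_hyps:
  "vars_lits H = {} \<Longrightarrow> L \<in> set H \<Longrightarrow> neg_lit L \<in> set H \<Longrightarrow> closes P CS G0 Gg (G, H)"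
  by (rule closes_contradiction) (auto intro: closes_by_hyps)

lemma closes_failure:
  fixes H :: "('p,'f,'v) lit list"
  assumes c: "(K, \<theta>) \<in> CS A"
    and ground: "vars_lits Gg = {}" "vars_lits H = {}" "\<forall>B\<in>set K. vars_atom B = {}"
    and closes_K: "closes P CS G0 Gg (map Pos K, H)"
  shows "closes P CS G0 Gg ([Neg A], H)"
  unfolding closes_def
proof (intro allI impI)
  fix \<Delta> :: "('p,'f,'v) sgoal" and \<sigma> and U :: "'v set"
  assume \<Delta>: "vars_sgoal \<Delta> = {}" and U: "finite U" and \<sigma>: "subst_lits G0 \<sigma> = Gg"
  have "vars_lits (map Pos K) = {}" using ground(3) by (auto simp: vars_lits_def vars_lit_def)
  then have "subst_sgoal ((map Pos K @ [], H) # \<Delta>) \<theta> = (map Pos K, H) # \<Delta>"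
    using ground(2) \<Delta> by (simp add: subst_lits_ground subst_sgoal_ground)
  then obtain U1 where step: "sk_step P CS G0 (([Neg A], H) # \<Delta>, \<sigma>, U)
      ((map Pos K, H) # \<Delta>, comp_subst \<sigma> \<theta>, U1)" and U1: "finite U1"
    using sk_step_failure_hd[of K \<theta> CS A P G0 "[]" H \<Delta> \<sigma> U, OF c] U by fastforce
  have restart: "subst_lits G0 (comp_subst \<sigma> \<theta>) = Gg"
    using \<sigma> ground(1) by (simp add: subst_lits_comp[symmetric] subst_lits_ground)
  then obtain \<sigma>' U' where "(sk_step P CS G0)\<^sup>*\<^sup>* ((map Pos K, H) # \<Delta>, comp_subst \<sigma> \<theta>, U1) (\<Delta>, \<sigma>', U')"
    using closes_K \<Delta> U1 unfolding closes_def by blast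
  then show "\<exists>\<sigma>' U'. (sk_step P CS G0)\<^sup>*\<^sup>* (([Neg A], H) # \<Delta>, \<sigma>, U) (\<Delta>, \<sigma>', U')"
    using step by (meson converse_rtranclp_into_rtranclp)
qed

lemma exists_bij_fresh:
  assumes "infinite (UNIV :: 'a set)" "finite A" "finite B"
  shows "\<exists>\<pi> :: 'a \<Rightarrow> 'a. bij \<pi> \<and> \<pi> ` A \<inter> B = {}"
  using assms(2)
proof (induction A rule: finite_induct)
  case empty
  show ?case using bij_id by blast
next
  case (insert a A)
  then obtain \<pi> where \<pi>: "bij \<pi>" "\<pi> ` A \<inter> B = {}" by blast
  have "finite (B \<union> \<pi> ` A)" using insert.hyps(1) assms(3) by simp
  then obtain z where z: "z \<notin> B \<union> \<pi> ` A"
    using ex_new_if_finite[OF assms(1)] by blast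
  define \<pi>' where "\<pi>' = transpose (\<pi> a) z \<circ> \<pi>"
  have "\<pi>' x = \<pi> x" if "x \<in> A" for x
  proof -
    have "\<pi> x \<noteq> \<pi> a" using that insert.hyps(2) bij_is_inj[OF \<pi>(1)] by (auto dest: injD)
    moreover have "\<pi> x \<noteq> z" using that z by blast
    ultimately show ?thesis by (simp add: \<pi>'_def)
  qed
  moreover have "\<pi>' a = z" by (simp add: \<pi>'_def)
  ultimately have "\<pi>' ` insert a A = insert z (\<pi> ` A)" by auto
  then have "\<pi>' ` insert a A \<inter> B = {}" using \<pi>(2) z by auto
  moreover have "bij \<pi>'" using \<pi>(1) by (simp add: \<pi>'_def bij_comp)
  ultimately show ?case by blast
qed

lemma exists_fresh_variant:
  fixes r :: "('p,'f,'v) rule"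
  assumes "infinite (UNIV :: 'v set)" "finite U"
  shows "\<exists>r' \<rho>. variant r r' \<and> vars_rule r' \<inter> U = {} \<and> subst_rule r' \<rho> = subst_rule r \<tau>"
proof -
  obtain \<pi> where \<pi>: "bij \<pi>" "\<pi> ` vars_rule r \<inter> U = {}"
    using exists_bij_fresh[OF assms(1) finite_vars_rule assms(2)] by blast
  define r' where "r' = subst_rule r (\<lambda>x. Var (\<pi> x))"
  define \<rho> where "\<rho> = (\<lambda>x. \<tau> (inv \<pi> x))"
  have "variant r r'" using \<pi>(1) by (auto simp: variant_def r'_def)
  moreover have "vars_rule r' = \<pi> ` vars_rule r"
    by (auto simp: r'_def vars_rule_def subst_rule_def vars_subst_atom vars_subst_lits)
  moreover have "comp_subst (\<lambda>x. Var (\<pi> x)) \<rho> = \<tau>"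
    using bij_is_inj[OF \<pi>(1)] by (auto simp: comp_subst_def \<rho>_def)
  then have "subst_rule r' \<rho> = subst_rule r \<tau>"
    by (simp add: r'_def subst_rule_def subst_atom_comp subst_lits_comp)
  ultimately show ?thesis using \<pi>(2) by blast
qed

lemma ground_prog_ground:
  assumes "(A, Bs) \<in> ground_prog P"
  shows "vars_atom A = {} \<and> vars_lits Bs = {}"
proof -
  have "vars_rule (A, Bs) = {}" using assms unfolding ground_prog_def by auto
  then show ?thesis by (simp add: vars_rule_def)
qed

lemma closes_program_rule:
  assumes inf: "infinite (UNIV :: 'v set)"
    and H: "vars_lits H = {}" and r: "(b, Bs0) \<in> ground_prog P" and body: "set Bs0 \<subseteq> set H"
  shows "closes P CS G0 Gg ([Pos b], H :: ('p,'f,'v) lit list)"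
  unfolding closes_def
proof (intro allI impI)
  fix \<Delta> :: "('p,'f,'v) sgoal" and \<sigma> and U :: "'v set"
  assume \<Delta>: "vars_sgoal \<Delta> = {}" and U: "finite U"
  obtain r0 \<tau> where r0: "r0 \<in> P" "(b, Bs0) = subst_rule r0 \<tau>"
    using r unfolding ground_prog_def by blast
  obtain r' \<rho> where variant: "variant r0 r'" and fresh_U: "vars_rule r' \<inter> U = {}"
    and inst: "subst_rule r' \<rho> = (b, Bs0)"
    using exists_fresh_variant[OF inf U, of r0 \<tau>] r0(2) by auto
  obtain A Bs where r': "r' = (A, Bs)" by fastforce
  have b: "subst_lit (Pos A) \<rho> = Pos b" and Bs0: "subst_lits Bs \<rho> = Bs0"
    using inst by (auto simp: r' subst_rule_def)
  have ground_head: "vars_atom b = {}" using ground_prog_ground[OF r] by simp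
  then have ground_b: "vars_lit (subst_lit (Pos A) \<rho>) = {}"
    using b by (simp add: vars_lit_def)
  have "vars_sgoal (([Pos b], H) # \<Delta>) = {}"
    using H \<Delta> ground_head by (simp add: vars_lit_def)
  then have fresh: "vars_rule (A, Bs) \<inter> (U \<union> vars_sgoal (([Pos b], H) # \<Delta>)) = {}"
    using fresh_U r' by auto
  define \<theta> where "\<theta> = matcher (Pos A) \<rho>"
  have mgu: "is_mgu_lit \<theta> (Pos b) (Pos A)"
    using is_mgu_lit_sym[OF matcher_is_mgu[OF ground_b]] b by (simp add: \<theta>_def)
  obtain U' where step: "sk_step P CS G0 (([Pos b], H) # \<Delta>, \<sigma>, U)
      ((subst_lits Bs \<theta>, H) # \<Delta>, comp_subst \<sigma> \<theta>, U')"
    using sk_step_res_prog_hd[OF r0(1) variant[unfolded r'] fresh mgu, of CS G0 \<sigma>] H \<Delta>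
    by (simp add: subst_lits_ground subst_sgoal_ground)
  have "\<forall>L\<in>set (subst_lits Bs \<theta>). subst_lit L \<rho> \<in> set H"
    using body Bs0 by (auto simp: subst_lit_comp \<theta>_def comp_matcher[OF ground_b] subst_lits_def)
  then obtain \<sigma>' U'' where "(sk_step P CS G0)\<^sup>*\<^sup>* ((subst_lits Bs \<theta>, H) # \<Delta>, comp_subst \<sigma> \<theta>, U')
      (\<Delta>, \<sigma>', U'')"
    using sk_steps_by_hyp_instances[OF H \<Delta>] by blast
  then show "\<exists>\<sigma>' U'. (sk_step P CS G0)\<^sup>*\<^sup>* (([Pos b], H) # \<Delta>, \<sigma>, U) (\<Delta>, \<sigma>', U')"
    using step by (meson converse_rtranclp_into_rtranclp)
qed

lemma closes_split:
  fixes H :: "('p,'f,'v) lit list"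
  assumes ground: "vars_lits Gg = {}" "vars_lits H = {}" "vars_lit L = {}"
    and pos: "closes P CS G0 Gg (Gg, H @ [L])" and neg: "closes P CS G0 Gg (Gg, H @ [neg_lit L])"
  shows "closes P CS G0 Gg (Gg, H)"
  unfolding closes_def
proof (intro allI impI)
  fix \<Delta> :: "('p,'f,'v) sgoal" and \<sigma> and U :: "'v set"
  assume \<Delta>: "vars_sgoal \<Delta> = {}" and U: "finite U" and \<sigma>: "subst_lits G0 \<sigma> = Gg"
  obtain U1 where split: "sk_step P CS G0 ((Gg, H) # \<Delta>, \<sigma>, U)
      ([(Gg, H @ [L]), (Gg, H @ [neg_lit L])] @ \<Delta>, \<sigma>, U1)" and U1: "finite U1"
    using sk_step_split_hd[of P CS G0 Gg H \<Delta> \<sigma> U L] \<sigma> U by fastforce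
  have "\<forall>g\<in>set [(Gg, H @ [L]), (Gg, H @ [neg_lit L])]. closes P CS G0 Gg g" using pos neg by simp
  moreover have "vars_sgoal ([(Gg, H @ [L]), (Gg, H @ [neg_lit L])] @ \<Delta>) = {}" using ground \<Delta> by simp
  ultimately obtain \<sigma>' U' where
    "(sk_step P CS G0)\<^sup>*\<^sup>* ([(Gg, H @ [L]), (Gg, H @ [neg_lit L])] @ \<Delta>, \<sigma>, U1) (\<Delta>, \<sigma>', U')"
    using sk_steps_if_closes_all[OF ground(1) _ _ U1 \<sigma>] by blast
  then show "\<exists>\<sigma>' U'. (sk_step P CS G0)\<^sup>*\<^sup>* ((Gg, H) # \<Delta>, \<sigma>, U) (\<Delta>, \<sigma>', U')"
    using split by (meson converse_rtranclp_into_rtranclp)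
qed

lemma closes_by_deciding:
  fixes H :: "('p,'f,'v) lit list"
  assumes Gg: "vars_lits Gg = {}"
  shows "vars_lits H = {} \<Longrightarrow> \<forall>d\<in>set ds. vars_atom d = {} \<Longrightarrow>
    (\<And>H'. set H \<subseteq> set H' \<Longrightarrow> vars_lits H' = {} \<Longrightarrow> \<forall>d\<in>set ds. Pos d \<in> set H' \<or> Neg d \<in> set H'
       \<Longrightarrow> closes P CS G0 Gg (Gg, H'))
    \<Longrightarrow> closes P CS G0 Gg (Gg, H)"
proof (induction ds arbitrary: H)
  case Nil
  then show ?case by simp
next
  case (Cons d ds)
  have "closes P CS G0 Gg (Gg, H @ [L])" if L: "L \<in> {Pos d, Neg d}" for L
  proof (rule Cons.IH)
    show "vars_lits (H @ [L]) = {}" using Cons.prems(1,2) L by (auto simp: vars_lit_def)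
    show "\<forall>d\<in>set ds. vars_atom d = {}" using Cons.prems(2) by simp
  next
    fix H' assume "set (H @ [L]) \<subseteq> set H'" "vars_lits H' = {}"
      "\<forall>d\<in>set ds. Pos d \<in> set H' \<or> Neg d \<in> set H'"
    then show "closes P CS G0 Gg (Gg, H')" using Cons.prems(3) L by auto
  qed
  then show ?case
    using closes_split[OF Gg Cons.prems(1), of "Pos d"] Cons.prems(2) by (simp add: vars_lit_def)
qed

section \<open>Local stability and compactness\<close>

definition dep_closed :: "('p,'f,'v) rule set \<Rightarrow> ('p,'f,'v) atom set \<Rightarrow> bool" where
  "dep_closed P D \<longleftrightarrow> (\<forall>a\<in>D. \<forall>b. dep_edge P a b \<longrightarrow> b \<in> D)"

definition dep_closure :: "('p,'f,'v) rule set \<Rightarrow> ('p,'f,'v) atom set \<Rightarrow> ('p,'f,'v) atom set" where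
  "dep_closure P S = {b. \<exists>a\<in>S. (dep_edge P)\<^sup>*\<^sup>* a b}"

lemma dep_closed_dep_closure: "dep_closed P (dep_closure P S)"
  unfolding dep_closed_def dep_closure_def by (auto intro: rtranclp.rtrancl_into_rtrancl)

lemma subset_dep_closure: "S \<subseteq> dep_closure P S"
  unfolding dep_closure_def by blast

lemma dep_edge_ground: "dep_edge P a b \<Longrightarrow> ground_atom b"
  unfolding dep_edge_def ground_atom_def
  by (auto dest!: ground_prog_ground simp: vars_lits_empty_iff vars_lit_def)

lemma ground_dep_closure: "\<forall>a\<in>S. ground_atom a \<Longrightarrow> \<forall>b\<in>dep_closure P S. ground_atom b"
proof -
  have "(dep_edge P)\<^sup>*\<^sup>* a b \<Longrightarrow> ground_atom a \<Longrightarrow> ground_atom b" for a b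
    by (induction rule: rtranclp_induct) (auto dest: dep_edge_ground)
  then show "\<forall>a\<in>S. ground_atom a \<Longrightarrow> \<forall>b\<in>dep_closure P S. ground_atom b"
    unfolding dep_closure_def by blast
qed

lemma finite_dep_closure:
  assumes "finitely_recursive P" "finite S" "\<forall>a\<in>S. ground_atom a"
  shows "finite (dep_closure P S)"
proof -
  have "dep_closure P S = (\<Union>a\<in>S. {b. (dep_edge P)\<^sup>*\<^sup>* a b})" unfolding dep_closure_def by blast
  then show ?thesis using assms unfolding finitely_recursive_def by simp
qed

lemma in_least_model_ground: "a \<in> least_model (reduct P M) \<Longrightarrow> ground_atom a"
proof (induction rule: least_model.induct)
  case (lm_rule A Bs)
  then show ?case unfolding reduct_def ground_atom_def by (auto dest: ground_prog_ground)
qed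

lemma least_model_reduct_transfer:
  assumes D: "dep_closed P D" and MD: "M \<inter> D = M' \<inter> D"
    and a: "a \<in> least_model (reduct P M)" "a \<in> D"
  shows "a \<in> least_model (reduct P M')"
  using a
proof (induction rule: least_model.induct)
  case (lm_rule A Bs)
  then obtain Bs0 where r: "(A, Bs0) \<in> ground_prog P" "\<forall>B. Neg B \<in> set Bs0 \<longrightarrow> B \<notin> M"
    and Bs: "Bs = [atom_of L. L \<leftarrow> Bs0, \<exists>B. L = Pos B]"
    unfolding reduct_def by blast
  have body_D: "atom_of L \<in> D" if "L \<in> set Bs0" for L
    using D lm_rule.prems r(1) that unfolding dep_closed_def dep_edge_def by blast
  then have "\<forall>B. Neg B \<in> set Bs0 \<longrightarrow> B \<notin> M'" using r(2) MD by force
  then have "(A, Bs) \<in> reduct P M'" using r(1) Bs unfolding reduct_def by blast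
  moreover have "\<forall>B\<in>set Bs. B \<in> least_model (reduct P M')"
    using lm_rule.IH Bs body_D by fastforce
  ultimately show ?case by (rule least_model.lm_rule)
qed

lemma least_model_reduct_local:
  "dep_closed P D \<Longrightarrow> M \<inter> D = M' \<inter> D \<Longrightarrow> a \<in> D \<Longrightarrow>
    a \<in> least_model (reduct P M) \<longleftrightarrow> a \<in> least_model (reduct P M')"
  using least_model_reduct_transfer by metis

definition locally_stable :: "('p,'f,'v) rule set \<Rightarrow> ('p,'f,'v) atom set \<Rightarrow> ('p,'f,'v) atom set \<Rightarrow> bool" where
  "locally_stable P D M \<longleftrightarrow> (\<forall>a\<in>D. a \<in> M \<longleftrightarrow> a \<in> least_model (reduct P (M \<inter> D)))"

lemma locally_stable_cong: "M \<inter> D = M' \<inter> D \<Longrightarrow> locally_stable P D M \<longleftrightarrow> locally_stable P D M'"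
  unfolding locally_stable_def by auto

lemma locally_stable_antimono:
  assumes "locally_stable P D' M" "D \<subseteq> D'" "dep_closed P D"
  shows "locally_stable P D M"
  unfolding locally_stable_def
proof
  fix a assume "a \<in> D"
  moreover have "(M \<inter> D') \<inter> D = (M \<inter> D) \<inter> D" using assms(2) by blast
  ultimately show "a \<in> M \<longleftrightarrow> a \<in> least_model (reduct P (M \<inter> D))"
    using assms least_model_reduct_local[OF assms(3)] unfolding locally_stable_def by blast
qed

lemma stable_model_if_locally_stable:
  assumes ground: "\<forall>a\<in>M. ground_atom a"
    and local: "\<And>a. ground_atom a \<Longrightarrow> \<exists>D. dep_closed P D \<and> a \<in> D \<and> locally_stable P D M"
  shows "stable_model P M"
  unfolding stable_model_def
proof (rule set_eqI)
  fix a
  show "a \<in> M \<longleftrightarrow> a \<in> least_model (reduct P M)"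
  proof (cases "ground_atom a")
    case True
    then obtain D where "dep_closed P D" "a \<in> D" "locally_stable P D M" using local by blast
    then show ?thesis
      using least_model_reduct_local[of P D "M \<inter> D" M a] unfolding locally_stable_def by auto
  next
    case False
    then show ?thesis using ground in_least_model_ground by blast
  qed
qed

lemma lit_true_cong: "atom_of L \<in> D \<Longrightarrow> M \<inter> D = M' \<inter> D \<Longrightarrow> lit_true M L \<longleftrightarrow> lit_true M' L"
  by (cases L) auto

definition local_countermodel :: "('p,'f,'v) rule set \<Rightarrow> ('p,'f,'v) atom set
    \<Rightarrow> ('p,'f,'v) lit list \<Rightarrow> ('p,'f,'v) lit list \<Rightarrow> ('p,'f,'v) atom set \<Rightarrow> bool" where
  "local_countermodel P D H G M \<longleftrightarrow>
     locally_stable P D M \<and> (\<forall>L\<in>set H. lit_true M L) \<and> \<not> (\<forall>L\<in>set G. lit_true M L)"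

lemma local_countermodel_cong:
  assumes "atom_of ` (set H \<union> set G) \<subseteq> D" "M \<inter> D = M' \<inter> D"
  shows "local_countermodel P D H G M \<longleftrightarrow> local_countermodel P D H G M'"
proof -
  have "lit_true M L \<longleftrightarrow> lit_true M' L" if "L \<in> set H \<union> set G" for L
    using lit_true_cong[OF _ assms(2)] assms(1) that by blast
  then show ?thesis
    using locally_stable_cong[OF assms(2)] unfolding local_countermodel_def by auto
qed

lemma local_countermodel_antimono:
  "local_countermodel P D' H G M \<Longrightarrow> D \<subseteq> D' \<Longrightarrow> dep_closed P D \<Longrightarrow> local_countermodel P D H G M"
  unfolding local_countermodel_def using locally_stable_antimono by blast

lemma topspace_bool_functions:
  "topspace (product_topology (\<lambda>_. discrete_topology (UNIV :: bool set)) (UNIV :: 'a set)) = UNIV"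
  by (auto simp: PiE_UNIV_domain)

lemma openin_bool_functions_finitely_determined:
  fixes S :: "('a \<Rightarrow> bool) set"
  assumes D: "finite D" and S: "\<And>f g. \<forall>x\<in>D. f x = g x \<Longrightarrow> f \<in> S \<Longrightarrow> g \<in> S"
  shows "openin (product_topology (\<lambda>_. discrete_topology UNIV) UNIV) S"
  unfolding openin_product_topology_alt
proof (intro ballI)
  fix f assume f: "f \<in> S"
  define U where "U = (\<lambda>i. if i \<in> D then {f i} else (UNIV :: bool set))"
  have "{i \<in> UNIV. U i \<noteq> topspace (discrete_topology UNIV)} \<subseteq> D"
    unfolding U_def by auto
  then have "finite {i \<in> UNIV. U i \<noteq> topspace (discrete_topology UNIV)}"
    using D by (rule finite_subset)
  moreover have "Pi\<^sub>E UNIV U \<subseteq> S"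
  proof
    fix g assume "g \<in> Pi\<^sub>E UNIV U"
    then have "\<forall>x\<in>D. f x = g x"
      by (metis (no_types, lifting) PiE_mem UNIV_I U_def singletonD)
    then show "g \<in> S" using S f by blast
  qed
  moreover have "f \<in> Pi\<^sub>E UNIV U" by (auto simp: U_def PiE_UNIV_domain)
  moreover have "\<forall>i\<in>UNIV. openin (discrete_topology UNIV) (U i)" by simp
  ultimately show "\<exists>U. finite {i \<in> UNIV. U i \<noteq> topspace (discrete_topology UNIV)} \<and>
      (\<forall>i\<in>UNIV. openin (discrete_topology UNIV) (U i)) \<and> f \<in> Pi\<^sub>E UNIV U \<and> Pi\<^sub>E UNIV U \<subseteq> S"
    by blast
qed

lemma closedin_bool_functions_finitely_determined:
  fixes S :: "('a \<Rightarrow> bool) set"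
  assumes D: "finite D" and S: "\<And>f g. \<forall>x\<in>D. f x = g x \<Longrightarrow> f \<in> S \<Longrightarrow> g \<in> S"
  shows "closedin (product_topology (\<lambda>_. discrete_topology UNIV) UNIV) S"
proof -
  have "openin (product_topology (\<lambda>_. discrete_topology UNIV) UNIV) (UNIV - S)"
  proof (rule openin_bool_functions_finitely_determined[OF D])
    fix f g :: "'a \<Rightarrow> bool"
    assume "\<forall>x\<in>D. f x = g x" "f \<in> UNIV - S"
    then show "g \<in> UNIV - S" using S[of g f] by auto
  qed
  then show ?thesis unfolding closedin_def topspace_bool_functions by auto
qed

lemma closedin_local_countermodels:
  fixes P :: "('p,'f,'v) rule set"
  assumes "finite D" "atom_of ` (set H \<union> set G) \<subseteq> D"
  shows "closedin (product_topology (\<lambda>_. discrete_topology UNIV) UNIV)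
    {f. local_countermodel P D H G (Collect f)}"
proof (rule closedin_bool_functions_finitely_determined[OF assms(1)])
  fix f g :: "('p,'f,'v) atom \<Rightarrow> bool"
  assume "\<forall>x\<in>D. f x = g x"
  then have "Collect f \<inter> D = Collect g \<inter> D" by auto
  then show "f \<in> {f. local_countermodel P D H G (Collect f)} \<Longrightarrow> g \<in> {f. local_countermodel P D H G (Collect f)}"
    using local_countermodel_cong[OF assms(2)] by blast
qed

definition finite_closed_supersets :: "('p,'f,'v) rule set \<Rightarrow> ('p,'f,'v) atom set \<Rightarrow> ('p,'f,'v) atom set set" where
  "finite_closed_supersets P D0 = {D. finite D \<and> dep_closed P D \<and> D0 \<subseteq> D \<and> (\<forall>a\<in>D. ground_atom a)}"

lemma dep_closure_in_finite_closed_supersets: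
  assumes "finitely_recursive P" "finite (D0 \<union> S)" "\<forall>a\<in>D0 \<union> S. ground_atom a"
  shows "dep_closure P (D0 \<union> S) \<in> finite_closed_supersets P D0"
  using finite_dep_closure[OF assms] dep_closed_dep_closure ground_dep_closure[OF assms(3)]
    subset_dep_closure[of "D0 \<union> S" P] unfolding finite_closed_supersets_def by auto

lemma stable_countermodel_if_local_countermodel_everywhere:
  fixes P :: "('p,'f,'v) rule set"
  assumes fr: "finitely_recursive P" and D0: "finite D0" "\<forall>a\<in>D0. ground_atom a"
    and atoms: "atom_of ` (set H \<union> set G) \<subseteq> D0"
    and local: "\<And>D. D \<in> finite_closed_supersets P D0 \<Longrightarrow> local_countermodel P D H G (Collect f)"
  defines "M \<equiv> {a. ground_atom a \<and> f a}"
  shows "stable_model P M \<and> (\<forall>L\<in>set H. lit_true M L) \<and> \<not> (\<forall>L\<in>set G. lit_true M L)"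
proof -
  have M_local: "local_countermodel P D H G M" if D: "D \<in> finite_closed_supersets P D0" for D
  proof -
    have "Collect f \<inter> D = M \<inter> D" using D unfolding M_def finite_closed_supersets_def by auto
    moreover have "atom_of ` (set H \<union> set G) \<subseteq> D" using D atoms unfolding finite_closed_supersets_def by blast
    ultimately show ?thesis using local[OF D] local_countermodel_cong by blast
  qed
  have "stable_model P M"
  proof (rule stable_model_if_locally_stable)
    show "\<forall>a\<in>M. ground_atom a" by (simp add: M_def)
    fix a :: "('p,'f,'v) atom"
    assume "ground_atom a"
    then have "dep_closure P (D0 \<union> {a}) \<in> finite_closed_supersets P D0"
      using D0 by (intro dep_closure_in_finite_closed_supersets[OF fr]) auto
    then show "\<exists>D. dep_closed P D \<and> a \<in> D \<and> locally_stable P D M"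
      using M_local subset_dep_closure dep_closed_dep_closure unfolding local_countermodel_def by blast
  qed
  moreover have "dep_closure P (D0 \<union> {}) \<in> finite_closed_supersets P D0"
    using D0 by (intro dep_closure_in_finite_closed_supersets[OF fr]) auto
  ultimately show ?thesis using M_local unfolding local_countermodel_def by blast
qed

text \<open>Were every such D refuted, the sets of local countermodels would be closed and have the
  finite intersection property in the compact space of interpretations; a common point of all of
  them is a stable countermodel.\<close>

lemma finite_dep_closed_set_without_countermodel:
  fixes P :: "('p,'f,'v) rule set"
  assumes fr: "finitely_recursive P" and D0: "finite D0" "\<forall>a\<in>D0. ground_atom a"
    and atoms: "atom_of ` (set H \<union> set G) \<subseteq> D0"
    and ent: "\<forall>M. stable_model P M \<longrightarrow> (\<forall>L\<in>set H. lit_true M L) \<longrightarrow> (\<forall>L\<in>set G. lit_true M L)"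
  shows "\<exists>D\<in>finite_closed_supersets P D0. \<forall>M. \<not> local_countermodel P D H G M"
proof (rule ccontr)
  let ?X = "product_topology (\<lambda>_. discrete_topology (UNIV :: bool set)) (UNIV :: ('p,'f,'v) atom set)"
  define \<D> where "\<D> = finite_closed_supersets P D0"
  define C where "C D = {f. local_countermodel P D H G (Collect f)}" for D
  assume "\<not> ?thesis"
  then have refuted: "\<exists>M. local_countermodel P D H G M" if "D \<in> \<D>" for D
    using that unfolding \<D>_def by blast
  have closed: "closedin ?X (C D)" if "D \<in> \<D>" for D
    using that atoms unfolding C_def \<D>_def finite_closed_supersets_def
    by (intro closedin_local_countermodels) auto
  have fip: "\<Inter>\<F> \<noteq> {}" if \<F>: "finite \<F>" "\<F> \<subseteq> C ` \<D>" for \<F>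
  proof -
    obtain \<D>' where \<D>': "\<D>' \<subseteq> \<D>" "finite \<D>'" "\<F> = C ` \<D>'"
      using finite_subset_image[OF \<F>] by metis
    define D' where "D' = dep_closure P (D0 \<union> \<Union>\<D>')"
    have "D' \<in> \<D>" unfolding D'_def \<D>_def using \<D>' D0
      by (intro dep_closure_in_finite_closed_supersets[OF fr]) (auto simp: \<D>_def finite_closed_supersets_def)
    then obtain M where M: "local_countermodel P D' H G M" using refuted by blast
    have "(\<lambda>a. a \<in> M) \<in> C D" if "D \<in> \<D>'" for D
    proof -
      have "D \<subseteq> D'"
        using that subset_dep_closure[of "D0 \<union> \<Union>\<D>'" P] unfolding D'_def by blast
      moreover have "dep_closed P D" using that \<D>' unfolding \<D>_def finite_closed_supersets_def by blast
      ultimately show ?thesis using local_countermodel_antimono[OF M] unfolding C_def by simp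
    qed
    then show ?thesis using \<D>' by blast
  qed
  have "compact_space ?X"
    by (simp add: compact_space_product_topology compact_space_discrete_topology)
  then have "\<Inter>(C ` \<D>) \<noteq> {}"
    by (rule compact_space_fip[THEN iffD1, rule_format]) (use closed fip in auto)
  then obtain f where "local_countermodel P D H G (Collect f)" if "D \<in> \<D>" for D
    unfolding C_def by blast
  then show False
    using stable_countermodel_if_local_countermodel_everywhere[OF fr D0 atoms] ent unfolding \<D>_def by blast
qed

section \<open>Supports and counter-supports\<close>

lemma rule_leaving_interpretation:
  assumes D: "dep_closed P D"
  shows "a \<in> least_model (reduct P I) \<Longrightarrow> a \<in> D \<Longrightarrow> a \<notin> I \<Longrightarrow>
    \<exists>b Bs. (b, Bs) \<in> ground_prog P \<and> b \<in> D \<and> b \<notin> I \<and> (\<forall>L\<in>set Bs. lit_true I L)"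
proof (induction rule: least_model.induct)
  case (lm_rule A Bs)
  then obtain Bs0 where r: "(A, Bs0) \<in> ground_prog P" "\<forall>B. Neg B \<in> set Bs0 \<longrightarrow> B \<notin> I"
    and Bs: "Bs = [atom_of L. L \<leftarrow> Bs0, \<exists>B. L = Pos B]"
    unfolding reduct_def by blast
  show ?case
  proof (cases "\<forall>B\<in>set Bs. B \<in> I")
    case True
    have "c \<in> set Bs" if "Pos c \<in> set Bs0" for c
      using that Bs by force
    then have "lit_true I L" if "L \<in> set Bs0" for L
      using that True r(2) by (cases L) auto
    then show ?thesis using r(1) lm_rule.prems by blast
  next
    case False
    then obtain B where B: "B \<in> set Bs" "B \<notin> I" by blast
    then have "dep_edge P A B" using r(1) Bs unfolding dep_edge_def by force
    then have "B \<in> D" using D lm_rule.prems(1) unfolding dep_closed_def by blast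
    then show ?thesis using lm_rule.IH B by blast
  qed
qed

lemma supp_steps_least_model:
  assumes "(supp_step P)\<^sup>*\<^sup>* Gs0 Gs" "\<forall>L\<in>set Gs. \<exists>B. L = Neg B \<and> B \<notin> I"
  shows "(\<forall>A. Pos A \<in> set Gs0 \<longrightarrow> A \<in> least_model (reduct P I)) \<and> (\<forall>B. Neg B \<in> set Gs0 \<longrightarrow> B \<notin> I)"
  using assms
proof (induction rule: converse_rtranclp_induct)
  case base
  then show ?case by fastforce
next
  case (step Gs0 Gs1)
  then obtain xs A ys Bs where s: "Gs0 = xs @ Pos A # ys" "(A, Bs) \<in> ground_prog P"
      "Gs1 = xs @ Bs @ ys"
    unfolding supp_step_def by blast
  have IH: "(\<forall>A. Pos A \<in> set Gs1 \<longrightarrow> A \<in> least_model (reduct P I)) \<and> (\<forall>B. Neg B \<in> set Gs1 \<longrightarrow> B \<notin> I)"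
    using step.IH step.prems by blast
  have "(A, [atom_of L. L \<leftarrow> Bs, \<exists>B. L = Pos B]) \<in> reduct P I"
    unfolding reduct_def using s IH by auto
  moreover have "\<forall>B\<in>set [atom_of L. L \<leftarrow> Bs, \<exists>B. L = Pos B]. B \<in> least_model (reduct P I)"
    using IH s by auto
  ultimately have "A \<in> least_model (reduct P I)" by (rule least_model.lm_rule)
  then show ?case using IH s by auto
qed

lemma supp_steps_dep_edges:
  assumes "(supp_step P)\<^sup>*\<^sup>* Gs0 Gs"
  shows "L \<in> set Gs \<Longrightarrow> \<exists>L0\<in>set Gs0. (dep_edge P)\<^sup>*\<^sup>* (atom_of L0) (atom_of L)"
  using assms
proof (induction arbitrary: L rule: rtranclp_induct)
  case base
  then show ?case by blast
next
  case (step Gs1 Gs2)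
  then obtain xs A ys Bs where s: "Gs1 = xs @ Pos A # ys" "(A, Bs) \<in> ground_prog P"
      "Gs2 = xs @ Bs @ ys"
    unfolding supp_step_def by blast
  show ?case
  proof (cases "L \<in> set Bs")
    case True
    obtain L0 where L0: "L0 \<in> set Gs0" "(dep_edge P)\<^sup>*\<^sup>* (atom_of L0) A"
      using step.IH[of "Pos A"] s(1) by auto
    have "dep_edge P A (atom_of L)" using s(2) True unfolding dep_edge_def by blast
    then show ?thesis using L0 by (meson rtranclp.rtrancl_into_rtrancl)
  next
    case False
    then show ?thesis using step s by auto
  qed
qed

text \<open>A support of a avoiding I would derive a in the reduct.\<close>

lemma ground_counter_support_if_not_in_least_model:
  assumes ground: "\<forall>B\<in>I. ground_atom B" and a: "a \<notin> least_model (reduct P I)"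
  shows "ground_counter_support P {B \<in> I. \<exists>S. is_support P a S \<and> Neg B \<in> S} a"
  unfolding ground_counter_support_def
proof (intro conjI ballI allI impI)
  fix S assume S: "is_support P a S"
  then obtain Gs where Gs: "(supp_step P)\<^sup>*\<^sup>* [Pos a] Gs" "\<forall>L\<in>set Gs. \<exists>B. L = Neg B" "S = set Gs"
    unfolding is_support_def by blast
  show "\<exists>B\<in>{B \<in> I. \<exists>S. is_support P a S \<and> Neg B \<in> S}. Neg B \<in> S"
  proof (rule ccontr)
    assume unblocked: "\<not> ?thesis"
    have "\<forall>L\<in>set Gs. \<exists>B. L = Neg B \<and> B \<notin> I"
    proof
      fix L assume L: "L \<in> set Gs"
      then obtain B where B: "L = Neg B" using Gs(2) by blast
      then have "B \<notin> I" using unblocked S Gs(3) L by blast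
      then show "\<exists>B. L = Neg B \<and> B \<notin> I" using B by blast
    qed
    from supp_steps_least_model[OF Gs(1) this] show False using a by simp
  qed
qed (use ground in auto)

fun nat_trm :: "nat \<Rightarrow> ('f,'v) trm" where
  "nat_trm 0 = Fun undefined []"
| "nat_trm (Suc n) = Fun undefined [nat_trm n]"

lemma vars_nat_trm: "vars_trm (nat_trm n) = {}"
  by (induction n) auto

lemma inj_nat_trm: "inj nat_trm"
proof
  fix m n :: nat
  show "nat_trm m = nat_trm n \<Longrightarrow> m = n"
    by (induction m arbitrary: n) (case_tac n; auto)+
qed

text \<open>A variable in a counter-support of a ground atom could be instantiated by infinitely many
  ground terms, each instance lying in a support of the atom and hence among its finitely many
  dependencies.\<close>

lemma counter_support_ground:
  fixes P :: "('p,'f,'v) rule set"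
  assumes fr: "finitely_recursive P" and cs: "counter_supp_fun P CS" and a: "ground_atom a"
    and c: "(K, \<theta>) \<in> CS a" and B: "B \<in> set K"
  shows "vars_atom B = {}"
proof (rule ccontr)
  assume "vars_atom B \<noteq> {}"
  then obtain y where y: "y \<in> vars_atom B" by blast
  define inst where "inst n = subst_atom B (\<lambda>_. nat_trm n)" for n
  have "inst n \<in> {b. (dep_edge P)\<^sup>*\<^sup>* a b}" for n
  proof -
    have "grounding (\<lambda>_. nat_trm n)" by (simp add: grounding_def vars_nat_trm)
    moreover have "subst_atom (subst_atom a \<theta>) (\<lambda>_. nat_trm n) = a"
      using a by (simp add: ground_atom_def subst_atom_ground)
    ultimately have "ground_counter_support P ((\<lambda>B. subst_atom B (\<lambda>_. nat_trm n)) ` set K) a"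
      using cs c unfolding counter_supp_fun_def gen_counter_support_def by force
    then obtain S where "is_support P a S" "Neg (inst n) \<in> S"
      using B unfolding ground_counter_support_def inst_def by auto
    then obtain Gs where "(supp_step P)\<^sup>*\<^sup>* [Pos a] Gs" "Neg (inst n) \<in> set Gs"
      unfolding is_support_def by blast
    then show ?thesis using supp_steps_dep_edges by fastforce
  qed
  moreover have "inj inst"
  proof
    fix m n assume "inst m = inst n"
    then have "(nat_trm m :: ('f,'v) trm) = nat_trm n" using y unfolding inst_def subst_atom_eq_iff by blast
    then show "m = n" by (rule injD[OF inj_nat_trm])
  qed
  ultimately have "infinite {b. (dep_edge P)\<^sup>*\<^sup>* a b}"
    by (meson finite_imageD finite_subset image_subsetI infinite_UNIV_nat)
  then show False using fr a unfolding finitely_recursive_def by blast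
qed

lemma closes_by_counter_support:
  fixes P :: "('p,'f,'v) rule set" and H :: "('p,'f,'v) lit list"
  assumes fr: "finitely_recursive P" and cs: "counter_supp_fun P CS" and csc: "cs_complete P CS"
    and ground: "vars_lits Gg = {}" "vars_lits H = {}" "ground_atom a"
    and a: "Pos a \<in> set H" and K: "ground_counter_support P K a" "\<forall>B\<in>K. Pos B \<in> set H"
  shows "closes P CS G0 Gg (G, H)"
proof -
  have "ground_atom (subst_atom a Var)" using ground(3) by simp
  then obtain K' \<theta> \<sigma> where c: "(K', \<theta>) \<in> CS a" and K': "(\<lambda>B. subst_atom B \<sigma>) ` set K' = K"
    using csc K(1) unfolding cs_complete_def by fastforce
  have K'_ground: "\<forall>B\<in>set K'. vars_atom B = {}"
    using counter_support_ground[OF fr cs ground(3) c] by blast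
  then have "set K' = K" using K' by (auto simp: subst_atom_ground)
  then have "closes P CS G0 Gg (map Pos K', H)"
    using K(2) by (intro closes_by_hyps[OF ground(2)]) auto
  then have "closes P CS G0 Gg ([neg_lit (Pos a)], H)"
    using closes_failure[where CS = CS and A = a, OF c ground(1,2) K'_ground] by simp
  then show ?thesis using a by (rule closes_contradiction[rotated])
qed

lemma closes_by_rule:
  assumes "infinite (UNIV :: 'v set)" "vars_lits H = {}"
    and "Neg b \<in> set H" "(b, Bs) \<in> ground_prog P" "set Bs \<subseteq> set H"
  shows "closes P CS G0 Gg (G, H :: ('p,'f,'v) lit list)"
  using closes_contradiction[of "Neg b" H] closes_program_rule[OF assms(1,2,4,5)] assms(3) by simp

lemma lit_true_decided_by_hyps:
  assumes "\<forall>L\<in>set H. neg_lit L \<notin> set H" "\<forall>d\<in>D. Pos d \<in> set H \<or> Neg d \<in> set H" "atom_of L \<in> D"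
  shows "lit_true {d \<in> D. Pos d \<in> set H} L \<longleftrightarrow> L \<in> set H"
  using assms by (cases L) force+

lemma closes_if_hyps_decide_dep_closed_set:
  fixes P :: "('p,'f,'v) rule set" and H :: "('p,'f,'v) lit list"
  assumes inf: "infinite (UNIV :: 'v set)" and fr: "finitely_recursive P"
    and cs: "counter_supp_fun P CS" and csc: "cs_complete P CS"
    and D: "dep_closed P D" "\<forall>a\<in>D. ground_atom a"
    and no_countermodel: "\<forall>M. \<not> local_countermodel P D Hg Gg M"
    and atoms: "atom_of ` (set Hg \<union> set Gg) \<subseteq> D"
    and H: "vars_lits H = {}" "set Hg \<subseteq> set H" "\<forall>d\<in>D. Pos d \<in> set H \<or> Neg d \<in> set H"
  shows "closes P CS G0 Gg (Gg, H)"
proof (cases "\<forall>L\<in>set H. neg_lit L \<notin> set H")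
  case False
  then show ?thesis using closes_inconsistent_hyps[OF H(1)] by blast
next
  case True
  define I where "I = {d\<in>D. Pos d \<in> set H}"
  have truth: "lit_true I L \<longleftrightarrow> L \<in> set H" if "atom_of L \<in> D" for L
    unfolding I_def using lit_true_decided_by_hyps[OF True H(3) that] .
  have Gg: "vars_lits Gg = {}"
    using atoms D(2) by (auto simp: vars_lits_empty_iff vars_lit_def ground_atom_def)
  have "I \<inter> D = I" by (auto simp: I_def)
  then consider (stable) "locally_stable P D I"
    | (underivable) a where "a \<in> I" "a \<notin> least_model (reduct P I)"
    | (derivable) a where "a \<in> D" "a \<notin> I" "a \<in> least_model (reduct P I)"
    unfolding locally_stable_def by (auto simp: I_def)
  then show ?thesis
  proof cases
    case stable
    have "lit_true I L \<longleftrightarrow> L \<in> set H" if "L \<in> set Hg \<union> set Gg" for L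
      using truth atoms that by blast
    then have "\<forall>L\<in>set Gg. lit_true I L"
      using no_countermodel stable H(2) unfolding local_countermodel_def by blast
    then have "set Gg \<subseteq> set H" using truth atoms by blast
    then show ?thesis by (rule closes_by_hyps[OF H(1)])
  next
    case underivable
    define K where "K = {B \<in> I. \<exists>S. is_support P a S \<and> Neg B \<in> S}"
    have "\<forall>B\<in>I. ground_atom B" using D(2) by (auto simp: I_def)
    then have K: "ground_counter_support P K a"
      unfolding K_def using underivable(2) by (rule ground_counter_support_if_not_in_least_model)
    have "\<forall>B\<in>K. Pos B \<in> set H" by (simp add: K_def I_def)
    moreover have "Pos a \<in> set H" "ground_atom a" using underivable(1) D(2) by (simp_all add: I_def)
    ultimately show ?thesis using closes_by_counter_support[OF fr cs csc Gg H(1) _ _ K] by blast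
  next
    case derivable
    then obtain b Bs where rule: "(b, Bs) \<in> ground_prog P" "b \<in> D" "b \<notin> I"
        "\<forall>L\<in>set Bs. lit_true I L"
      using rule_leaving_interpretation[OF D(1)] by blast
    have "atom_of L \<in> D" if "L \<in> set Bs" for L
      using D(1) rule(1,2) that unfolding dep_closed_def dep_edge_def by blast
    then have "set Bs \<subseteq> set H" using truth rule(4) by blast
    moreover have "Neg b \<in> set H" using truth[of "Neg b"] rule(2,3) by (simp add: I_def)
    ultimately show ?thesis using closes_by_rule[OF inf H(1) _ rule(1)] by blast
  qed
qed

lemma closes_entailed_instance:
  fixes P :: "('p,'f,'v) rule set" and H :: "('p,'f,'v) lit list"
  assumes inf: "infinite (UNIV :: 'v set)" and fr: "finitely_recursive P"
    and cs: "counter_supp_fun P CS" and csc: "cs_complete P CS"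
    and ground: "vars_lits Gg = {}" "vars_lits Hg = {}"
    and ent: "\<forall>M. stable_model P M \<longrightarrow> (\<forall>L\<in>set Hg. lit_true M L) \<longrightarrow> (\<forall>L\<in>set Gg. lit_true M L)"
    and H: "vars_lits H = {}" "set Hg \<subseteq> set H"
  shows "closes P CS G0 Gg (Gg, H)"
proof -
  define D0 where "D0 = atom_of ` (set Hg \<union> set Gg)"
  have "finite D0" by (simp add: D0_def)
  moreover have "\<forall>a\<in>D0. ground_atom a"
    using ground by (auto simp: D0_def vars_lits_empty_iff vars_lit_def ground_atom_def)
  ultimately obtain D where "D \<in> finite_closed_supersets P D0"
    and no_countermodel: "\<forall>M. \<not> local_countermodel P D Hg Gg M"
    using finite_dep_closed_set_without_countermodel[OF fr _ _ _ ent] unfolding D0_def by blast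
  then have D: "finite D" "dep_closed P D" "atom_of ` (set Hg \<union> set Gg) \<subseteq> D" "\<forall>a\<in>D. ground_atom a"
    unfolding finite_closed_supersets_def D0_def by auto
  obtain ds where ds: "set ds = D" using finite_list[OF D(1)] by blast
  show ?thesis
  proof (rule closes_by_deciding[OF ground(1) H(1)])
    show "\<forall>d\<in>set ds. vars_atom d = {}" using D(4) ds by (simp add: ground_atom_def)
    fix H' assume "set H \<subseteq> set H'" "vars_lits H' = {}" "\<forall>d\<in>set ds. Pos d \<in> set H' \<or> Neg d \<in> set H'"
    then show "closes P CS G0 Gg (Gg, H')"
      using H(2) ds by (intro closes_if_hyps_decide_dep_closed_set[OF inf fr cs csc D(2,4)
          no_countermodel D(3)]) auto
  qed
qed

text \<open>The derivation starts by splitting on the ground literal Lg and then on an atom Lv that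
  carries all variables of the goal; resolving Lv against the hypothesis Lg instantiates the whole
  s-goal by gamma. The predicate symbol of Lv is irrelevant.\<close>

lemma sk_steps_instantiating_goal:
  fixes G H :: "('p,'f,'v) lit list"
  assumes \<gamma>: "grounding \<gamma>"
  shows "\<exists>\<theta> U Lg. (sk_step P CS G)\<^sup>*\<^sup>* ([(G, H)], Var, vars_hgoal (G, H))
      ([(subst_lits G \<gamma>, subst_lits H \<gamma> @ [Lg, Lg]), (subst_lits G \<gamma>, subst_lits H \<gamma> @ [neg_lit Lg])], \<theta>, U)
    \<and> (\<forall>x\<in>vars_hgoal (G, H). \<theta> x = \<gamma> x) \<and> vars_lit Lg = {}"
proof -
  define V where "V = vars_hgoal (G, H)"
  obtain xs where xs: "set xs = V" using finite_list[of V] by (auto simp: V_def)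
  define Lv :: "('p,'f,'v) lit" where "Lv = Pos (Atom undefined (map Var xs))"
  define Lg where "Lg = subst_lit Lv \<gamma>"
  define \<theta> where "\<theta> = matcher Lv \<gamma>"
  have vars_Lv: "vars_lit Lv = V" by (auto simp: Lv_def vars_lit_def xs)
  have ground_Lg: "vars_lit Lg = {}" using \<gamma> by (simp add: Lg_def vars_subst_lit grounding_def)
  have \<theta>: "\<forall>x\<in>V. \<theta> x = \<gamma> x" by (simp add: \<theta>_def matcher_def vars_Lv)
  have mgu: "is_mgu_lit \<theta> Lv Lg" using matcher_is_mgu ground_Lg by (simp add: \<theta>_def Lg_def)
  have inst: "subst_lits G \<theta> = subst_lits G \<gamma>" "subst_lits H \<theta> = subst_lits H \<gamma>"
    "subst_lit Lv \<theta> = Lg" "subst_lit Lg \<theta> = Lg"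
    using \<theta> vars_Lv ground_Lg
    by (auto simp: subst_lits_eq_iff subst_lit_eq_iff V_def Lg_def subst_lit_ground)
  let ?rest = "[(G, H @ [Lg, Lv]), (G, H @ [neg_lit Lg])]"
  obtain U1 where s1:
    "sk_step P CS G ([(G, H)], Var, V) ([(G, H @ [Lg]), (G, H @ [neg_lit Lg])], Var, U1)"
    using sk_step_split_hd[of P CS G G H "[]" Var V Lg] by simp
  obtain U2 where s2: "sk_step P CS G ([(G, H @ [Lg]), (G, H @ [neg_lit Lg])], Var, U1)
       ((G, H @ [Lg, neg_lit Lv]) # ?rest, Var, U2)"
    using sk_step_split_hd[of P CS G G "H @ [Lg]" "[(G, H @ [neg_lit Lg])]" Var U1 "neg_lit Lv"] by simp
  obtain U3 where s3: "sk_step P CS G ((G, H @ [Lg, neg_lit Lv]) # ?rest, Var, U2)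
       (([Lv], H @ [Lg, neg_lit Lv]) # ?rest, Var, U3)"
    using sk_step_contradiction_hd[of "neg_lit Lv" "H @ [Lg, neg_lit Lv]" P CS G G ?rest Var U2] by simp
  obtain U4 where s4: "sk_step P CS G (([Lv], H @ [Lg, neg_lit Lv]) # ?rest, Var, U3)
       (subst_sgoal (([], H @ [Lg, neg_lit Lv]) # ?rest) \<theta>, \<theta>, U4)"
    using sk_step_res_hyp_hd[OF _ mgu, of "H @ [Lg, neg_lit Lv]" P CS G "[]" ?rest Var U3] by simp
  note s1 s2 s3 s4
  moreover have "sk_step P CS G (subst_sgoal (([], H @ [Lg, neg_lit Lv]) # ?rest) \<theta>, \<theta>, U4)
      ([(subst_lits G \<gamma>, subst_lits H \<gamma> @ [Lg, Lg]), (subst_lits G \<gamma>, subst_lits H \<gamma> @ [neg_lit Lg])], \<theta>, U4)"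
    using sk_step_success_hd by (simp add: inst)
  ultimately show ?thesis using \<theta> ground_Lg unfolding V_def
    by (meson converse_rtranclp_into_rtranclp rtranclp.rtrancl_refl)
qed

theorem theorem6p9:
  fixes P :: "('p,'f,'v) rule set"
    and CS :: "('p,'f,'v) atom \<Rightarrow> (('p,'f,'v) atom list \<times> ('f,'v) subst) set"
    and G H :: "('p,'f,'v) lit list"
    and \<gamma> :: "('f,'v) subst"
  assumes "infinite (UNIV :: 'v set)"
    and "finitely_recursive P"
    and "counter_supp_fun P CS"
    and "cs_complete P CS"
    and "grounding \<gamma>"
    and "\<forall>M. stable_model P M \<longrightarrow>
           (\<forall>L\<in>set (subst_lits H \<gamma>). lit_true M L) \<longrightarrow> (\<forall>L\<in>set (subst_lits G \<gamma>). lit_true M L)"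
  shows "\<exists>\<theta> U \<delta>. (sk_step P CS G)\<^sup>*\<^sup>* ([(G, H)], Var, vars_hgoal (G, H)) ([], \<theta>, U)
           \<and> (\<forall>x\<in>vars_hgoal (G, H). \<gamma> x = subst_trm (\<theta> x) \<delta>)"
proof -
  define Gg Hg where "Gg = subst_lits G \<gamma>" and "Hg = subst_lits H \<gamma>"
  have ground: "vars_lits Gg = {}" "vars_lits Hg = {}"
    using assms(5) by (auto simp: Gg_def Hg_def vars_subst_lits grounding_def)
  have ent: "\<forall>M. stable_model P M \<longrightarrow> (\<forall>L\<in>set Hg. lit_true M L) \<longrightarrow> (\<forall>L\<in>set Gg. lit_true M L)"
    using assms(6) unfolding Gg_def Hg_def .
  obtain \<theta> U Lg where start: "(sk_step P CS G)\<^sup>*\<^sup>* ([(G, H)], Var, vars_hgoal (G, H))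
      ([(Gg, Hg @ [Lg, Lg]), (Gg, Hg @ [neg_lit Lg])], \<theta>, U)"
    and \<theta>: "\<forall>x\<in>vars_hgoal (G, H). \<theta> x = \<gamma> x" and Lg: "vars_lit Lg = {}"
    using sk_steps_instantiating_goal[OF assms(5)] unfolding Gg_def Hg_def by blast
  have "\<forall>g\<in>set [(Gg, Hg @ [Lg, Lg]), (Gg, Hg @ [neg_lit Lg])]. closes P CS G Gg g"
    using ground(2) Lg by (auto intro!: closes_entailed_instance[OF assms(1-4) ground ent])
  moreover have "vars_sgoal ([(Gg, Hg @ [Lg, Lg]), (Gg, Hg @ [neg_lit Lg])] @ []) = {}"
    using ground Lg by simp
  moreover have "finite U" using sk_steps_preserve[OF start] by simp
  moreover have "subst_lits G \<theta> = Gg" using \<theta> by (auto simp: Gg_def subst_lits_eq_iff)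
  ultimately obtain \<theta>' U' where finish: "(sk_step P CS G)\<^sup>*\<^sup>*
      ([(Gg, Hg @ [Lg, Lg]), (Gg, Hg @ [neg_lit Lg])] @ [], \<theta>, U) ([], \<theta>', U')"
    and "\<forall>x. vars_trm (\<theta> x) = {} \<longrightarrow> \<theta>' x = \<theta> x"
    using sk_steps_if_closes_all[OF ground(1)] by blast
  then have "\<forall>x\<in>vars_hgoal (G, H). \<gamma> x = subst_trm (\<theta>' x) Var"
    using \<theta> assms(5) by (simp add: grounding_def)
  then show ?thesis using rtranclp_trans[OF start finish[simplified]] by blast
qed

end
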